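(* Let $(X_n)_{n\ge0}$ be a stationary and ergodic process with $\sum_{i=0}^\infty|\mathrm{Cov}(X_0,X_i)|<\infty$ and let $\mu=\mathbb{E}X_0$. Let $v\ge1$ be an integer, and assume $\mathbb{E}[X_0^2]<\infty$ if $v\in\{1,2\}$, respectively $\mathbb{E}|X_0|^v<\infty$ if $v>2$. Then, as $n\to\infty$, $$\frac1n\sum_{i=1}^n(X_i-\mu)^v\big(|X_i-\bar X_n|-|X_i-\mu|\big)=(\bar X_n-\mu)\,\mathbb{E}[(X_0-\mu)^v\,\mathrm{sgn}(\mu-X_0)]+o_P(1/\sqrt n).$$
   Context: $\bar X_n=\frac1n\sum_{i=1}^nX_i$; $\mathrm{sgn}(x)=-1_{(x<0)}+1_{(x>0)}$; $Y_n=o_P(a_n)$ means $Y_n/a_n\to0$ in probability. *)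

theory Defs
  imports "HOL-Probability.Probability"
begin

definition seq_space :: "(nat \<Rightarrow> real) measure" where
  "seq_space = PiM UNIV (\<lambda>_. borel)"

definition seq_law :: "'a measure \<Rightarrow> (nat \<Rightarrow> 'a \<Rightarrow> real) \<Rightarrow> (nat \<Rightarrow> real) measure" where
  "seq_law M X = distr M seq_space (\<lambda>\<omega> i. X i \<omega>)"

definition seq_shift :: "(nat \<Rightarrow> real) \<Rightarrow> (nat \<Rightarrow> real)" where
  "seq_shift f = (\<lambda>i. f (Suc i))"

definition stationary_process :: "'a measure \<Rightarrow> (nat \<Rightarrow> 'a \<Rightarrow> real) \<Rightarrow> bool" where
  "stationary_process M X \<longleftrightarrow>
     (\<forall>k. distr M seq_space (\<lambda>\<omega> i. X (i + k) \<omega>) = distr M seq_space (\<lambda>\<omega> i. X i \<omega>))"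

definition ergodic_process :: "'a measure \<Rightarrow> (nat \<Rightarrow> 'a \<Rightarrow> real) \<Rightarrow> bool" where
  "ergodic_process M X \<longleftrightarrow>
     (\<forall>A \<in> sets seq_space. seq_shift -` A \<inter> space seq_space = A \<longrightarrow>
        measure (seq_law M X) A = 0 \<or> measure (seq_law M X) A = 1)"

definition covariance :: "'a measure \<Rightarrow> ('a \<Rightarrow> real) \<Rightarrow> ('a \<Rightarrow> real) \<Rightarrow> real" where
  "covariance M Y Z = (\<integral>\<omega>. (Y \<omega> - (\<integral>x. Y x \<partial>M)) * (Z \<omega> - (\<integral>x. Z x \<partial>M)) \<partial>M)"

definition small_o_P :: "'a measure \<Rightarrow> (nat \<Rightarrow> 'a \<Rightarrow> real) \<Rightarrow> (nat \<Rightarrow> real) \<Rightarrow> bool" where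
  "small_o_P M Y a \<longleftrightarrow>
     (\<forall>e>0. (\<lambda>n. measure M {\<omega> \<in> space M. \<bar>Y n \<omega> / a n\<bar> > e}) \<longlonglongrightarrow> 0)"

definition sample_mean :: "(nat \<Rightarrow> 'a \<Rightarrow> real) \<Rightarrow> nat \<Rightarrow> 'a \<Rightarrow> real" where
  "sample_mean X n \<omega> = (\<Sum>i=1..n. X i \<omega>) / real n"

end

theory Submission
  imports Defs
begin

(* Write D_n = mean_n - mu. For each i, (X_i - mu)^v (|X_i - mu - D_n| - |X_i - mu|) differs from
   D_n (X_i - mu)^v sgn(mu - X_i) by at most 2 |D_n|^(v+1), and not at all when |X_i - mu| > |D_n|.
   Hence sqrt n times the difference of the two sides is at most |sqrt n D_n| (|A_n - c| + 2 |D_n|^v),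
   where A_n is the empirical mean of (X_i - mu)^v sgn(mu - X_i) and c its expectation.
   Summable covariances give E (sqrt n D_n)^2 <= 2 sum_i |Cov(X_0, X_i)|, so sqrt n D_n is bounded
   in probability and D_n -> 0, while A_n -> c by Birkhoff's ergodic theorem. The latter follows
   from the maximal ergodic inequality: for h with negative mean, the event that the partial sums
   of h(X_i) are unbounded is shift invariant, hence has probability 0 or 1, and probability 1
   would force E h(X_0) >= 0. *)

section \<open>The maximal ergodic inequality\<close>

lemma space_seq_space [simp]: "space seq_space = UNIV"
  by (simp add: seq_space_def space_PiM)

lemma measurable_seq_component [measurable]: "(\<lambda>t. t i) \<in> borel_measurable seq_space"
  unfolding seq_space_def by (rule measurable_component_singleton) auto

definition partial_sum :: "(real \<Rightarrow> real) \<Rightarrow> nat \<Rightarrow> (nat \<Rightarrow> real) \<Rightarrow> real" where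
  "partial_sum h k t = (\<Sum>i<k. h (t i))"

definition max_partial_sum :: "(real \<Rightarrow> real) \<Rightarrow> nat \<Rightarrow> (nat \<Rightarrow> real) \<Rightarrow> real" where
  "max_partial_sum h N t = Max ((\<lambda>k. partial_sum h k t) ` {..N})"

lemma measurable_partial_sum [measurable]:
  assumes [measurable]: "h \<in> borel_measurable borel"
  shows "partial_sum h k \<in> borel_measurable seq_space"
  unfolding partial_sum_def by measurable

lemma measurable_max_partial_sum [measurable]:
  assumes "h \<in> borel_measurable borel"
  shows "max_partial_sum h N \<in> borel_measurable seq_space"
  unfolding max_partial_sum_def using assms by (intro borel_measurable_Max) auto

lemma partial_sum_0 [simp]: "partial_sum h 0 t = 0"
  by (simp add: partial_sum_def)

lemma partial_sum_Suc_shift: "partial_sum h (Suc k) t = h (t 0) + partial_sum h k (seq_shift t)"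
  unfolding partial_sum_def seq_shift_def by (rule sum.lessThan_Suc_shift)

lemma partial_sum_le_max_partial_sum: "k \<le> N \<Longrightarrow> partial_sum h k t \<le> max_partial_sum h N t"
  unfolding max_partial_sum_def by (rule Max_ge) auto

lemma max_partial_sum_attained: obtains k where "k \<le> N" "max_partial_sum h N t = partial_sum h k t"
proof -
  have "max_partial_sum h N t \<in> (\<lambda>k. partial_sum h k t) ` {..N}"
    unfolding max_partial_sum_def by (rule Max_in) auto
  then show ?thesis using that by auto
qed

lemma max_partial_sum_nonneg: "0 \<le> max_partial_sum h N t"
  using partial_sum_le_max_partial_sum[of 0 N h t] by simp

lemma abs_max_partial_sum_le: "\<bar>max_partial_sum h N t\<bar> \<le> (\<Sum>i<N. \<bar>h (t i)\<bar>)"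
proof -
  obtain k where k: "k \<le> N" "max_partial_sum h N t = partial_sum h k t"
    by (rule max_partial_sum_attained)
  have "\<bar>partial_sum h k t\<bar> \<le> (\<Sum>i<k. \<bar>h (t i)\<bar>)"
    unfolding partial_sum_def by (rule sum_abs)
  also have "\<dots> \<le> (\<Sum>i<N. \<bar>h (t i)\<bar>)"
    using k by (intro sum_mono2) auto
  finally show ?thesis using k by simp
qed

text \<open>Garsia's argument: a positive maximum is attained at some \<open>k \<ge> 1\<close>, and dropping the first
  term leaves a partial sum of the shifted sequence.\<close>
lemma max_partial_sum_diff_shift_le:
  "max_partial_sum h N t - max_partial_sum h N (seq_shift t)
     \<le> (if max_partial_sum h N t > 0 then h (t 0) else 0)"
proof (cases "max_partial_sum h N t > 0")
  case True
  obtain k where k: "k \<le> N" "max_partial_sum h N t = partial_sum h k t"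
    by (rule max_partial_sum_attained)
  with True obtain j where j: "k = Suc j"
    by (cases k) auto
  have "partial_sum h j (seq_shift t) \<le> max_partial_sum h N (seq_shift t)"
    using k j by (intro partial_sum_le_max_partial_sum) auto
  then show ?thesis
    using True k j partial_sum_Suc_shift[of h j t] by simp
next
  case False
  then show ?thesis
    using max_partial_sum_nonneg[of h N "seq_shift t"] by simp
qed

locale stationary_seq = prob_space M for M :: "'a measure" +
  fixes X :: "nat \<Rightarrow> 'a \<Rightarrow> real"
  assumes measurable_X [measurable]: "\<And>i. X i \<in> borel_measurable M"
    and stationary: "stationary_process M X"
begin

lemma measurable_shifted_seq [measurable]: "(\<lambda>\<omega> i. X (i + k) \<omega>) \<in> measurable M seq_space"
  unfolding seq_space_def by (rule measurable_PiM_single') auto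

lemma measurable_seq [measurable]: "(\<lambda>\<omega> i. X i \<omega>) \<in> measurable M seq_space"
  using measurable_shifted_seq[of 0] by simp

lemma integral_shifted_seq:
  fixes F :: "(nat \<Rightarrow> real) \<Rightarrow> real"
  assumes [measurable]: "F \<in> borel_measurable seq_space"
  shows "(\<integral>\<omega>. F (\<lambda>i. X (i + k) \<omega>) \<partial>M) = (\<integral>\<omega>. F (\<lambda>i. X i \<omega>) \<partial>M)"
proof -
  have "(\<integral>\<omega>. F (\<lambda>i. X (i + k) \<omega>) \<partial>M) = integral\<^sup>L (distr M seq_space (\<lambda>\<omega> i. X (i + k) \<omega>)) F"
    by (rule integral_distr[symmetric]) (auto simp: assms)
  also have "\<dots> = integral\<^sup>L (distr M seq_space (\<lambda>\<omega> i. X i \<omega>)) F"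
    using stationary unfolding stationary_process_def by simp
  also have "\<dots> = (\<integral>\<omega>. F (\<lambda>i. X i \<omega>) \<partial>M)"
    by (rule integral_distr) (auto simp: assms)
  finally show ?thesis .
qed

lemma integrable_shifted_seq_iff:
  fixes F :: "(nat \<Rightarrow> real) \<Rightarrow> real"
  assumes [measurable]: "F \<in> borel_measurable seq_space"
  shows "integrable M (\<lambda>\<omega>. F (\<lambda>i. X (i + k) \<omega>)) \<longleftrightarrow> integrable M (\<lambda>\<omega>. F (\<lambda>i. X i \<omega>))"
proof -
  have "integrable M (\<lambda>\<omega>. F (\<lambda>i. X (i + k) \<omega>)) \<longleftrightarrow> integrable (distr M seq_space (\<lambda>\<omega> i. X (i + k) \<omega>)) F"
    by (rule integrable_distr_eq[symmetric]) (auto simp: assms)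
  also have "\<dots> \<longleftrightarrow> integrable (distr M seq_space (\<lambda>\<omega> i. X i \<omega>)) F"
    using stationary unfolding stationary_process_def by simp
  also have "\<dots> \<longleftrightarrow> integrable M (\<lambda>\<omega>. F (\<lambda>i. X i \<omega>))"
    by (rule integrable_distr_eq) (auto simp: assms)
  finally show ?thesis .
qed

lemma integrable_X_iff:
  fixes h :: "real \<Rightarrow> real"
  assumes [measurable]: "h \<in> borel_measurable borel"
  shows "integrable M (\<lambda>\<omega>. h (X i \<omega>)) \<longleftrightarrow> integrable M (\<lambda>\<omega>. h (X 0 \<omega>))"
  using integrable_shifted_seq_iff[of "\<lambda>t. h (t 0)" i] by simp

lemma integral_X:
  fixes h :: "real \<Rightarrow> real"
  assumes [measurable]: "h \<in> borel_measurable borel"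
  shows "(\<integral>\<omega>. h (X i \<omega>) \<partial>M) = (\<integral>\<omega>. h (X 0 \<omega>) \<partial>M)"
  using integral_shifted_seq[of "\<lambda>t. h (t 0)" i] by simp

theorem maximal_ergodic_inequality:
  assumes [measurable]: "h \<in> borel_measurable borel"
    and integrable: "integrable M (\<lambda>\<omega>. h (X 0 \<omega>))"
  shows "0 \<le> (\<integral>\<omega>. (if max_partial_sum h N (\<lambda>i. X i \<omega>) > 0 then h (X 0 \<omega>) else 0) \<partial>M)"
proof -
  let ?S = "\<lambda>k \<omega>. max_partial_sum h N (\<lambda>i. X (i + k) \<omega>)"
  have "integrable M (\<lambda>\<omega>. h (X i \<omega>))" for i
    using integrable integrable_X_iff[of h i] by simp
  then have "integrable M (\<lambda>\<omega>. \<Sum>i<N. \<bar>h (X i \<omega>)\<bar>)"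
    by auto
  then have "integrable M (?S 0)"
  proof (rule Bochner_Integration.integrable_bound)
    show "AE \<omega> in M. norm (?S 0 \<omega>) \<le> norm (\<Sum>i<N. \<bar>h (X i \<omega>)\<bar>)"
      using abs_max_partial_sum_le by (auto intro!: AE_I2 simp: sum_nonneg)
  qed simp
  then have integrable_S: "integrable M (?S k)" for k
    using integrable_shifted_seq_iff[of "max_partial_sum h N" k] by simp
  have shift: "seq_shift (\<lambda>i. X i \<omega>) = (\<lambda>i. X (i + 1) \<omega>)" for \<omega>
    by (simp add: seq_shift_def)
  have "0 = (\<integral>\<omega>. ?S 0 \<omega> \<partial>M) - (\<integral>\<omega>. ?S 1 \<omega> \<partial>M)"
    using integral_shifted_seq[of "max_partial_sum h N" 1] by simp
  also have "\<dots> = (\<integral>\<omega>. ?S 0 \<omega> - ?S 1 \<omega> \<partial>M)"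
    by (rule Bochner_Integration.integral_diff[OF integrable_S integrable_S, symmetric])
  also have "\<dots> \<le> (\<integral>\<omega>. (if max_partial_sum h N (\<lambda>i. X i \<omega>) > 0 then h (X 0 \<omega>) else 0) \<partial>M)"
  proof (rule integral_mono)
    show "integrable M (\<lambda>\<omega>. ?S 0 \<omega> - ?S 1 \<omega>)"
      by (rule Bochner_Integration.integrable_diff[OF integrable_S integrable_S])
    show "integrable M (\<lambda>\<omega>. if max_partial_sum h N (\<lambda>i. X i \<omega>) > 0 then h (X 0 \<omega>) else 0)"
      by (rule Bochner_Integration.integrable_bound[OF integrable_abs[OF integrable]])
        (auto intro!: AE_I2)
    show "?S 0 \<omega> - ?S 1 \<omega> \<le> (if max_partial_sum h N (\<lambda>i. X i \<omega>) > 0 then h (X 0 \<omega>) else 0)" for \<omega>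
      using max_partial_sum_diff_shift_le[of h N "\<lambda>i. X i \<omega>"] by (simp add: shift)
  qed
  finally show ?thesis .
qed

end

section \<open>Birkhoff's ergodic theorem\<close>

definition unbounded_partial_sums :: "(real \<Rightarrow> real) \<Rightarrow> (nat \<Rightarrow> real) set" where
  "unbounded_partial_sums h = {t. \<forall>K::nat. \<exists>n. partial_sum h n t > real K}"

lemma sets_unbounded_partial_sums [measurable]:
  assumes [measurable]: "h \<in> borel_measurable borel"
  shows "unbounded_partial_sums h \<in> sets seq_space"
proof -
  have "unbounded_partial_sums h = {t \<in> space seq_space. \<forall>K::nat. \<exists>n. partial_sum h n t > real K}"
    by (simp add: unbounded_partial_sums_def)
  also have "\<dots> \<in> sets seq_space"
    by measurable
  finally show ?thesis .
qed

lemma not_in_unbounded_partial_sums_iff: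
  "t \<notin> unbounded_partial_sums h \<longleftrightarrow> (\<exists>B. \<forall>n. partial_sum h n t \<le> B)"
proof
  assume "\<exists>B. \<forall>n. partial_sum h n t \<le> B"
  then obtain B where "\<And>n. partial_sum h n t \<le> B"
    by blast
  moreover obtain K :: nat where "B \<le> real K"
    using real_arch_simple by blast
  ultimately have "\<forall>n. partial_sum h n t \<le> real K"
    by (meson order_trans)
  then show "t \<notin> unbounded_partial_sums h"
    unfolding unbounded_partial_sums_def by (auto simp: not_less)
qed (force simp: unbounded_partial_sums_def not_less)

lemma shift_mem_unbounded_partial_sums_iff:
  "seq_shift t \<in> unbounded_partial_sums h \<longleftrightarrow> t \<in> unbounded_partial_sums h"
proof -
  have "(\<exists>B. \<forall>n. partial_sum h n (seq_shift t) \<le> B) \<longleftrightarrow> (\<exists>B. \<forall>n. partial_sum h n t \<le> B)"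
  proof
    assume "\<exists>B. \<forall>n. partial_sum h n (seq_shift t) \<le> B"
    then obtain B where B: "\<And>n. partial_sum h n (seq_shift t) \<le> B"
      by blast
    have "partial_sum h n t \<le> max 0 (h (t 0) + B)" for n
      using B by (cases n) (auto simp: partial_sum_Suc_shift intro: max.coboundedI2)
    then show "\<exists>B. \<forall>n. partial_sum h n t \<le> B"
      by blast
  next
    assume "\<exists>B. \<forall>n. partial_sum h n t \<le> B"
    then obtain B where "\<And>n. partial_sum h n t \<le> B"
      by blast
    then have "partial_sum h n (seq_shift t) \<le> B - h (t 0)" for n
      using partial_sum_Suc_shift[of h n t] by (metis add.commute le_diff_eq)
    then show "\<exists>B. \<forall>n. partial_sum h n (seq_shift t) \<le> B"
      by blast
  qed
  then show ?thesis
    using not_in_unbounded_partial_sums_iff by blast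
qed

context stationary_seq
begin

text \<open>If the partial sums are almost surely unbounded, the events \<open>max_partial_sum h N > 0\<close>
  exhaust the space as \<open>N \<rightarrow> \<infinity>\<close>, and dominated convergence turns the maximal ergodic
  inequality into \<open>0 \<le> E h(X\<^sub>0)\<close>.\<close>
lemma integral_nonneg_if_AE_unbounded_partial_sums:
  assumes [measurable]: "h \<in> borel_measurable borel"
    and integrable: "integrable M (\<lambda>\<omega>. h (X 0 \<omega>))"
    and unbounded: "AE \<omega> in M. (\<lambda>i. X i \<omega>) \<in> unbounded_partial_sums h"
  shows "0 \<le> (\<integral>\<omega>. h (X 0 \<omega>) \<partial>M)"
proof -
  let ?f = "\<lambda>N \<omega>. if max_partial_sum h N (\<lambda>i. X i \<omega>) > 0 then h (X 0 \<omega>) else 0"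
  have "(\<lambda>N. \<integral>\<omega>. ?f N \<omega> \<partial>M) \<longlonglongrightarrow> (\<integral>\<omega>. h (X 0 \<omega>) \<partial>M)"
  proof (rule integral_dominated_convergence[where w = "\<lambda>\<omega>. \<bar>h (X 0 \<omega>)\<bar>"])
    show "AE \<omega> in M. (\<lambda>N. ?f N \<omega>) \<longlonglongrightarrow> h (X 0 \<omega>)"
      using unbounded
    proof eventually_elim
      case (elim \<omega>)
      then obtain n where n: "partial_sum h n (\<lambda>i. X i \<omega>) > real 0"
        unfolding unbounded_partial_sums_def by blast
      have "?f N \<omega> = h (X 0 \<omega>)" if "n \<le> N" for N
        using n partial_sum_le_max_partial_sum[OF that, of h "\<lambda>i. X i \<omega>"] by simp
      then have "\<forall>\<^sub>F N in sequentially. ?f N \<omega> = h (X 0 \<omega>)"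
        unfolding eventually_sequentially by blast
      then show ?case
        by (rule tendsto_eventually)
    qed
    show "AE \<omega> in M. norm (?f N \<omega>) \<le> \<bar>h (X 0 \<omega>)\<bar>" for N
      by (rule AE_I2) simp
    show "integrable M (\<lambda>\<omega>. \<bar>h (X 0 \<omega>)\<bar>)"
      using integrable by (rule integrable_abs)
  qed measurable
  moreover have "0 \<le> (\<integral>\<omega>. ?f N \<omega> \<partial>M)" for N
    by (rule maximal_ergodic_inequality[OF _ integrable]) measurable
  ultimately show ?thesis
    by (intro LIMSEQ_le_const) auto
qed

end

locale ergodic_seq = stationary_seq +
  assumes ergodic: "ergodic_process M X"
begin

lemma prob_unbounded_partial_sums:
  assumes [measurable]: "h \<in> borel_measurable borel"
    and integrable: "integrable M (\<lambda>\<omega>. h (X 0 \<omega>))"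
    and negative: "(\<integral>\<omega>. h (X 0 \<omega>) \<partial>M) < 0"
  shows "prob {\<omega> \<in> space M. (\<lambda>i. X i \<omega>) \<in> unbounded_partial_sums h} = 0"
proof -
  let ?A = "{\<omega> \<in> space M. (\<lambda>i. X i \<omega>) \<in> unbounded_partial_sums h}"
  have "measure (seq_law M X) (unbounded_partial_sums h) = prob ?A"
    unfolding seq_law_def by (subst measure_distr) (auto intro: arg_cong[where f = "measure M"])
  moreover have "seq_shift -` unbounded_partial_sums h \<inter> space seq_space = unbounded_partial_sums h"
    using shift_mem_unbounded_partial_sums_iff by auto
  moreover have "unbounded_partial_sums h \<in> sets seq_space"
    by measurable
  ultimately have "prob ?A = 0 \<or> prob ?A = 1"
    using ergodic unfolding ergodic_process_def by metis
  moreover have "prob ?A \<noteq> 1"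
  proof
    assume "prob ?A = 1"
    then have "AE \<omega> in M. (\<lambda>i. X i \<omega>) \<in> unbounded_partial_sums h"
      using AE_in_set_eq_1[of ?A] by (simp add: AE_iff_measurable)
    then show False
      using integral_nonneg_if_AE_unbounded_partial_sums[OF _ integrable] negative by auto
  qed
  ultimately show ?thesis
    by blast
qed

lemma AE_eventually_average_le:
  assumes g_measurable [measurable]: "g \<in> borel_measurable borel"
    and integrable: "integrable M (\<lambda>\<omega>. g (X 0 \<omega>))"
    and "e > 0"
  shows "AE \<omega> in M. \<forall>\<^sub>F n in sequentially.
           (\<Sum>i<n. g (X i \<omega>)) / real n \<le> (\<integral>\<omega>. g (X 0 \<omega>) \<partial>M) + e"
proof -
  define c where "c = (\<integral>\<omega>. g (X 0 \<omega>) \<partial>M) + e / 2"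
  define h where "h x = g x - c" for x
  have h_measurable [measurable]: "h \<in> borel_measurable borel"
    unfolding h_def by measurable
  have integrable_h: "integrable M (\<lambda>\<omega>. h (X 0 \<omega>))"
    unfolding h_def using integrable by simp
  have "(\<integral>\<omega>. h (X 0 \<omega>) \<partial>M) < 0"
    unfolding h_def c_def using integrable \<open>e > 0\<close> by (simp add: prob_space)
  then have "prob {\<omega> \<in> space M. (\<lambda>i. X i \<omega>) \<in> unbounded_partial_sums h} = 0"
    by (rule prob_unbounded_partial_sums[OF h_measurable integrable_h])
  then have "AE \<omega> in M. \<omega> \<notin> {\<omega> \<in> space M. (\<lambda>i. X i \<omega>) \<in> unbounded_partial_sums h}"
    by (subst (asm) prob_eq_0) auto
  then have "AE \<omega> in M. (\<lambda>i. X i \<omega>) \<notin> unbounded_partial_sums h"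
    by (rule AE_mp) (auto intro!: AE_I2)
  then show ?thesis
  proof eventually_elim
    case (elim \<omega>)
    then obtain B where B: "\<And>n. partial_sum h n (\<lambda>i. X i \<omega>) \<le> B"
      unfolding not_in_unbounded_partial_sums_iff by blast
    have "\<forall>\<^sub>F n in sequentially. B / real n < e / 2"
      using \<open>e > 0\<close> by (intro order_tendstoD(2)[OF lim_const_over_n]) simp
    moreover have "\<forall>\<^sub>F n in sequentially. n > 0"
      by (simp add: eventually_gt_at_top)
    ultimately show ?case
    proof eventually_elim
      case (elim n)
      have "(\<Sum>i<n. g (X i \<omega>)) = partial_sum h n (\<lambda>i. X i \<omega>) + real n * c"
        unfolding partial_sum_def h_def by (simp add: sum_subtractf)
      then have "(\<Sum>i<n. g (X i \<omega>)) / real n \<le> B / real n + c"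
        using B[of n] elim(2) by (simp add: field_simps)
      then show ?case
        using elim(1) unfolding c_def by linarith
    qed
  qed
qed

theorem birkhoff_ergodic_AE:
  assumes g_measurable [measurable]: "g \<in> borel_measurable borel"
    and integrable: "integrable M (\<lambda>\<omega>. g (X 0 \<omega>))"
  shows "AE \<omega> in M. (\<lambda>n. (\<Sum>i<n. g (X i \<omega>)) / real n) \<longlonglongrightarrow> (\<integral>\<omega>. g (X 0 \<omega>) \<partial>M)"
proof -
  let ?m = "\<integral>\<omega>. g (X 0 \<omega>) \<partial>M"
  have close: "AE \<omega> in M. \<forall>\<^sub>F n in sequentially. \<bar>(\<Sum>i<n. g (X i \<omega>)) / real n - ?m\<bar> \<le> e"
    if "e > 0" for e
  proof -
    have "AE \<omega> in M. \<forall>\<^sub>F n in sequentially.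
            (\<Sum>i<n. - g (X i \<omega>)) / real n \<le> (\<integral>\<omega>. - g (X 0 \<omega>) \<partial>M) + e"
      using that integrable by (intro AE_eventually_average_le) auto
    with AE_eventually_average_le[OF g_measurable integrable that] show ?thesis
    proof eventually_elim
      case (elim \<omega>)
      from elim(1,2) show ?case
        by eventually_elim (simp add: sum_negf abs_le_iff)
    qed
  qed
  have "AE \<omega> in M. \<forall>k. \<forall>\<^sub>F n in sequentially.
          \<bar>(\<Sum>i<n. g (X i \<omega>)) / real n - ?m\<bar> \<le> 1 / real (Suc k)"
    unfolding AE_all_countable by (intro allI close) simp
  then show ?thesis
  proof eventually_elim
    case (elim \<omega>)
    show ?case
    proof (rule LIMSEQ_I)
      fix r :: real
      assume "r > 0"
      then obtain k where k: "1 / real (Suc k) < r"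
        using reals_Archimedean by (auto simp: inverse_eq_divide)
      have "\<forall>\<^sub>F n in sequentially. norm ((\<Sum>i<n. g (X i \<omega>)) / real n - ?m) < r"
        using elim[rule_format, of k] by (rule eventually_mono) (use k in simp)
      then show "\<exists>N. \<forall>n\<ge>N. norm ((\<Sum>i<n. g (X i \<omega>)) / real n - ?m) < r"
        unfolding eventually_sequentially .
    qed
  qed
qed

end

section \<open>Convergence in probability\<close>

definition tendsto_zero_in_prob :: "'a measure \<Rightarrow> (nat \<Rightarrow> 'a \<Rightarrow> real) \<Rightarrow> bool" where
  "tendsto_zero_in_prob M Z \<longleftrightarrow>
     (\<forall>e>0. (\<lambda>n. measure M {\<omega> \<in> space M. \<bar>Z n \<omega>\<bar> > e}) \<longlonglongrightarrow> 0)"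

definition bounded_in_prob :: "'a measure \<Rightarrow> (nat \<Rightarrow> 'a \<Rightarrow> real) \<Rightarrow> bool" where
  "bounded_in_prob M U \<longleftrightarrow>
     (\<forall>d>0. \<exists>K>0. \<forall>n. measure M {\<omega> \<in> space M. \<bar>U n \<omega>\<bar> > K} \<le> d)"

lemma small_o_P_iff_tendsto_zero_in_prob:
  "small_o_P M Y a \<longleftrightarrow> tendsto_zero_in_prob M (\<lambda>n \<omega>. Y n \<omega> / a n)"
  by (simp add: small_o_P_def tendsto_zero_in_prob_def)

context prob_space
begin

lemma prob_tendsto_0_if_le:
  assumes "\<forall>\<^sub>F n in sequentially. prob (A n) \<le> p n" and "p \<longlonglongrightarrow> 0"
  shows "(\<lambda>n. prob (A n)) \<longlonglongrightarrow> 0"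
  by (rule tendsto_sandwich[OF _ assms(1) tendsto_const assms(2)]) simp

lemma prob_le_add_if_subset_Un:
  assumes "{\<omega> \<in> space M. P \<omega>} \<subseteq> {\<omega> \<in> space M. Q \<omega>} \<union> {\<omega> \<in> space M. R \<omega>}"
    and "{\<omega> \<in> space M. Q \<omega>} \<in> sets M" "{\<omega> \<in> space M. R \<omega>} \<in> sets M"
  shows "prob {\<omega> \<in> space M. P \<omega>} \<le> prob {\<omega> \<in> space M. Q \<omega>} + prob {\<omega> \<in> space M. R \<omega>}"
  using finite_measure_mono[OF assms(1)] measure_Un_le[OF assms(2,3)] assms(2,3) by auto

lemma tendsto_zero_in_prob_dominated:
  assumes [measurable]: "\<And>n. Z n \<in> borel_measurable M"
    and "tendsto_zero_in_prob M Z"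
    and "\<forall>\<^sub>F n in sequentially. \<forall>\<omega>\<in>space M. \<bar>W n \<omega>\<bar> \<le> \<bar>Z n \<omega>\<bar>"
  shows "tendsto_zero_in_prob M W"
  unfolding tendsto_zero_in_prob_def
proof (intro allI impI)
  fix e :: real
  assume "e > 0"
  from assms(3) have "\<forall>\<^sub>F n in sequentially.
      prob {\<omega> \<in> space M. \<bar>W n \<omega>\<bar> > e} \<le> prob {\<omega> \<in> space M. \<bar>Z n \<omega>\<bar> > e}"
  proof eventually_elim
    case (elim n)
    have "\<bar>Z n \<omega>\<bar> > e" if "\<omega> \<in> space M" "\<bar>W n \<omega>\<bar> > e" for \<omega>
      using elim[rule_format, OF that(1)] that(2) by linarith
    then have "{\<omega> \<in> space M. \<bar>W n \<omega>\<bar> > e} \<subseteq> {\<omega> \<in> space M. \<bar>Z n \<omega>\<bar> > e}"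
      by blast
    then show ?case
      by (rule finite_measure_mono) measurable
  qed
  moreover have "(\<lambda>n. prob {\<omega> \<in> space M. \<bar>Z n \<omega>\<bar> > e}) \<longlonglongrightarrow> 0"
    using assms(2) \<open>e > 0\<close> unfolding tendsto_zero_in_prob_def by blast
  ultimately show "(\<lambda>n. prob {\<omega> \<in> space M. \<bar>W n \<omega>\<bar> > e}) \<longlonglongrightarrow> 0"
    by (rule prob_tendsto_0_if_le)
qed

lemma tendsto_zero_in_prob_add:
  assumes [measurable]: "\<And>n. Z n \<in> borel_measurable M" "\<And>n. Y n \<in> borel_measurable M"
    and "tendsto_zero_in_prob M Z" "tendsto_zero_in_prob M Y"
  shows "tendsto_zero_in_prob M (\<lambda>n \<omega>. Z n \<omega> + Y n \<omega>)"
  unfolding tendsto_zero_in_prob_def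
proof (intro allI impI)
  fix e :: real
  assume "e > 0"
  have "prob {\<omega> \<in> space M. \<bar>Z n \<omega> + Y n \<omega>\<bar> > e}
      \<le> prob {\<omega> \<in> space M. \<bar>Z n \<omega>\<bar> > e / 2} + prob {\<omega> \<in> space M. \<bar>Y n \<omega>\<bar> > e / 2}" for n
    by (rule prob_le_add_if_subset_Un) auto
  moreover have "(\<lambda>n. prob {\<omega> \<in> space M. \<bar>Z n \<omega>\<bar> > e / 2} + prob {\<omega> \<in> space M. \<bar>Y n \<omega>\<bar> > e / 2})
      \<longlonglongrightarrow> 0"
    using assms(3,4) half_gt_zero[OF \<open>e > 0\<close>] unfolding tendsto_zero_in_prob_def
    by (intro tendsto_add_zero) blast+
  ultimately show "(\<lambda>n. prob {\<omega> \<in> space M. \<bar>Z n \<omega> + Y n \<omega>\<bar> > e}) \<longlonglongrightarrow> 0"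
    by (rule prob_tendsto_0_if_le[OF always_eventually, OF allI])
qed

lemma tendsto_zero_in_prob_cmult:
  assumes [measurable]: "\<And>n. Z n \<in> borel_measurable M"
    and "tendsto_zero_in_prob M Z"
  shows "tendsto_zero_in_prob M (\<lambda>n \<omega>. c * Z n \<omega>)"
proof (rule tendsto_zero_in_prob_dominated)
  show "tendsto_zero_in_prob M (\<lambda>n \<omega>. (\<bar>c\<bar> + 1) * Z n \<omega>)"
    unfolding tendsto_zero_in_prob_def
  proof (intro allI impI)
    fix e :: real
    assume "e > 0"
    have "\<bar>c\<bar> + 1 > 0"
      by (simp add: add_nonneg_pos)
    then have "{\<omega> \<in> space M. \<bar>(\<bar>c\<bar> + 1) * Z n \<omega>\<bar> > e} = {\<omega> \<in> space M. \<bar>Z n \<omega>\<bar> > e / (\<bar>c\<bar> + 1)}" for n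
      by (simp add: abs_mult pos_divide_less_eq mult.commute)
    moreover have "(\<lambda>n. prob {\<omega> \<in> space M. \<bar>Z n \<omega>\<bar> > e / (\<bar>c\<bar> + 1)}) \<longlonglongrightarrow> 0"
      using assms(2) \<open>e > 0\<close> \<open>\<bar>c\<bar> + 1 > 0\<close> unfolding tendsto_zero_in_prob_def
      by (meson divide_pos_pos)
    ultimately show "(\<lambda>n. prob {\<omega> \<in> space M. \<bar>(\<bar>c\<bar> + 1) * Z n \<omega>\<bar> > e}) \<longlonglongrightarrow> 0"
      by simp
  qed
  show "\<forall>\<^sub>F n in sequentially. \<forall>\<omega>\<in>space M. \<bar>c * Z n \<omega>\<bar> \<le> \<bar>(\<bar>c\<bar> + 1) * Z n \<omega>\<bar>"
    by (intro always_eventually) (simp add: abs_mult mult_right_mono)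
qed measurable

lemma tendsto_zero_in_prob_power:
  assumes [measurable]: "\<And>n. Z n \<in> borel_measurable M"
    and "tendsto_zero_in_prob M Z" and "v \<ge> 1"
  shows "tendsto_zero_in_prob M (\<lambda>n \<omega>. \<bar>Z n \<omega>\<bar> ^ v)"
  unfolding tendsto_zero_in_prob_def
proof (intro allI impI)
  fix e :: real
  assume "e > 0"
  have "\<bar>z\<bar> > min e 1" if "\<bar>\<bar>z\<bar> ^ v\<bar> > e" for z :: real
  proof (rule ccontr)
    assume "\<not> \<bar>z\<bar> > min e 1"
    then have "\<bar>z\<bar> ^ v \<le> \<bar>z\<bar> ^ 1"
      using \<open>v \<ge> 1\<close> by (intro power_decreasing) auto
    with that \<open>\<not> \<bar>z\<bar> > min e 1\<close> show False
      by simp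
  qed
  then have "prob {\<omega> \<in> space M. \<bar>\<bar>Z n \<omega>\<bar> ^ v\<bar> > e} \<le> prob {\<omega> \<in> space M. \<bar>Z n \<omega>\<bar> > min e 1}" for n
    by (intro finite_measure_mono) (blast, measurable)
  moreover have "(\<lambda>n. prob {\<omega> \<in> space M. \<bar>Z n \<omega>\<bar> > min e 1}) \<longlonglongrightarrow> 0"
    using assms(2) \<open>e > 0\<close> unfolding tendsto_zero_in_prob_def by simp
  ultimately show "(\<lambda>n. prob {\<omega> \<in> space M. \<bar>\<bar>Z n \<omega>\<bar> ^ v\<bar> > e}) \<longlonglongrightarrow> 0"
    by (rule prob_tendsto_0_if_le[OF always_eventually, OF allI])
qed

lemma tendsto_zero_in_prob_const:
  assumes "c \<longlonglongrightarrow> 0"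
  shows "tendsto_zero_in_prob M (\<lambda>n \<omega>. c n)"
  unfolding tendsto_zero_in_prob_def
proof (intro allI impI)
  fix e :: real
  assume "e > 0"
  then have "\<forall>\<^sub>F n in sequentially. \<bar>c n\<bar> < e"
    using order_tendstoD(2)[OF tendsto_rabs_zero[OF assms]] by blast
  then have "\<forall>\<^sub>F n in sequentially. prob {\<omega> \<in> space M. \<bar>c n\<bar> > e} = 0"
    by (rule eventually_mono) simp
  then show "(\<lambda>n. prob {\<omega> \<in> space M. \<bar>c n\<bar> > e}) \<longlonglongrightarrow> 0"
    by (rule tendsto_eventually)
qed

lemma prob_abs_mult_gt_le:
  fixes U V :: "'a \<Rightarrow> real"
  assumes [measurable]: "U \<in> borel_measurable M" "V \<in> borel_measurable M" and "K > 0"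
  shows "prob {\<omega> \<in> space M. \<bar>U \<omega> * V \<omega>\<bar> > e}
    \<le> prob {\<omega> \<in> space M. \<bar>U \<omega>\<bar> > K} + prob {\<omega> \<in> space M. \<bar>V \<omega>\<bar> > e / K}"
proof (rule prob_le_add_if_subset_Un)
  have "\<bar>U \<omega> * V \<omega>\<bar> \<le> K * (e / K)" if "\<bar>U \<omega>\<bar> \<le> K" "\<bar>V \<omega>\<bar> \<le> e / K" for \<omega>
    unfolding abs_mult using that by (intro mult_mono) auto
  then show "{\<omega> \<in> space M. \<bar>U \<omega> * V \<omega>\<bar> > e}
      \<subseteq> {\<omega> \<in> space M. \<bar>U \<omega>\<bar> > K} \<union> {\<omega> \<in> space M. \<bar>V \<omega>\<bar> > e / K}"
    using \<open>K > 0\<close> by (force simp: not_less)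
qed auto

lemma tendsto_zero_in_prob_mult_bounded:
  assumes [measurable]: "\<And>n. U n \<in> borel_measurable M" "\<And>n. V n \<in> borel_measurable M"
    and bounded: "bounded_in_prob M U" and vanishing: "tendsto_zero_in_prob M V"
  shows "tendsto_zero_in_prob M (\<lambda>n \<omega>. U n \<omega> * V n \<omega>)"
  unfolding tendsto_zero_in_prob_def
proof (intro allI impI)
  fix e :: real
  assume "e > 0"
  show "(\<lambda>n. prob {\<omega> \<in> space M. \<bar>U n \<omega> * V n \<omega>\<bar> > e}) \<longlonglongrightarrow> 0"
  proof (rule LIMSEQ_I)
    fix r :: real
    assume "r > 0"
    then obtain K where K: "K > 0" "\<And>n. prob {\<omega> \<in> space M. \<bar>U n \<omega>\<bar> > K} \<le> r / 2"
      using bounded unfolding bounded_in_prob_def by (meson half_gt_zero)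
    have "(\<lambda>n. prob {\<omega> \<in> space M. \<bar>V n \<omega>\<bar> > e / K}) \<longlonglongrightarrow> 0"
      using vanishing \<open>e > 0\<close> K(1) unfolding tendsto_zero_in_prob_def by simp
    then have "\<forall>\<^sub>F n in sequentially. prob {\<omega> \<in> space M. \<bar>V n \<omega>\<bar> > e / K} < r / 2"
      by (rule order_tendstoD(2)) (rule half_gt_zero[OF \<open>r > 0\<close>])
    then obtain N where N: "\<And>n. n \<ge> N \<Longrightarrow> prob {\<omega> \<in> space M. \<bar>V n \<omega>\<bar> > e / K} < r / 2"
      unfolding eventually_sequentially by blast
    have "prob {\<omega> \<in> space M. \<bar>U n \<omega> * V n \<omega>\<bar> > e} < r" if "n \<ge> N" for n
    proof -
      have "prob {\<omega> \<in> space M. \<bar>U n \<omega> * V n \<omega>\<bar> > e} < r / 2 + r / 2"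
        using prob_abs_mult_gt_le[OF _ _ K(1)] add_le_less_mono[OF K(2)[of n] N[OF that]]
        by (rule order.strict_trans1) measurable
      then show ?thesis
        by simp
    qed
    then show "\<exists>N. \<forall>n\<ge>N. norm (prob {\<omega> \<in> space M. \<bar>U n \<omega> * V n \<omega>\<bar> > e} - 0) < r"
      by (intro exI[of _ N]) simp
  qed
qed

lemma tendsto_zero_in_prob_if_bounded_in_prob_sqrt:
  assumes [measurable]: "\<And>n. D n \<in> borel_measurable M"
    and "bounded_in_prob M (\<lambda>n \<omega>. sqrt (real n) * D n \<omega>)"
  shows "tendsto_zero_in_prob M D"
proof (rule tendsto_zero_in_prob_dominated)
  have "(\<lambda>n. 1 / sqrt (real n)) \<longlonglongrightarrow> 0"
    using tendsto_real_sqrt[OF lim_inverse_n] by (simp add: real_sqrt_inverse divide_inverse)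
  then show "tendsto_zero_in_prob M (\<lambda>n \<omega>. sqrt (real n) * D n \<omega> * (1 / sqrt (real n)))"
    using assms(2) by (intro tendsto_zero_in_prob_mult_bounded tendsto_zero_in_prob_const) auto
  show "\<forall>\<^sub>F n in sequentially. \<forall>\<omega>\<in>space M. \<bar>D n \<omega>\<bar> \<le> \<bar>sqrt (real n) * D n \<omega> * (1 / sqrt (real n))\<bar>"
    by (auto simp: eventually_sequentially intro!: exI[of _ 1])
qed measurable

lemma tendsto_zero_in_prob_AE:
  assumes [measurable]: "\<And>n. Z n \<in> borel_measurable M"
    and "AE \<omega> in M. (\<lambda>n. Z n \<omega>) \<longlonglongrightarrow> 0"
  shows "tendsto_zero_in_prob M Z"
  unfolding tendsto_zero_in_prob_def
proof (intro allI impI)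
  fix e :: real
  assume "e > 0"
  define B where "B n = {\<omega> \<in> space M. \<exists>k\<ge>n. \<bar>Z k \<omega>\<bar> > e}" for n
  have B_sets: "range B \<subseteq> sets M"
    unfolding B_def by auto
  have "decseq B"
    unfolding B_def decseq_def by auto (meson le_trans)
  with B_sets have "(\<lambda>n. prob (B n)) \<longlonglongrightarrow> prob (\<Inter>n. B n)"
    by (rule finite_Lim_measure_decseq)
  moreover have "AE \<omega> in M. \<omega> \<notin> (\<Inter>n. B n)"
    using assms(2)
  proof eventually_elim
    case (elim \<omega>)
    have "\<forall>\<^sub>F n in sequentially. \<bar>Z n \<omega>\<bar> < e"
      using order_tendstoD(2)[OF tendsto_rabs_zero[OF elim] \<open>e > 0\<close>] .
    then obtain N where "\<And>n. n \<ge> N \<Longrightarrow> \<bar>Z n \<omega>\<bar> < e"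
      unfolding eventually_sequentially by blast
    then have "\<omega> \<notin> B N"
      unfolding B_def by force
    then show ?case
      by blast
  qed
  then have "prob (\<Inter>n. B n) = 0"
    using B_sets by (subst prob_eq_0) auto
  ultimately have "(\<lambda>n. prob (B n)) \<longlonglongrightarrow> 0"
    by simp
  moreover have "prob {\<omega> \<in> space M. \<bar>Z n \<omega>\<bar> > e} \<le> prob (B n)" for n
    using B_sets by (intro finite_measure_mono) (auto simp: B_def)
  then have "\<forall>\<^sub>F n in sequentially. prob {\<omega> \<in> space M. \<bar>Z n \<omega>\<bar> > e} \<le> prob (B n)"
    by (simp add: always_eventually)
  ultimately show "(\<lambda>n. prob {\<omega> \<in> space M. \<bar>Z n \<omega>\<bar> > e}) \<longlonglongrightarrow> 0"
    by (rule prob_tendsto_0_if_le[rotated])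
qed

lemma bounded_in_prob_if_second_moment_le:
  assumes [measurable]: "\<And>n. U n \<in> borel_measurable M"
    and integrable: "\<And>n. integrable M (\<lambda>\<omega>. (U n \<omega>)\<^sup>2)"
    and bound: "\<And>n. (\<integral>\<omega>. (U n \<omega>)\<^sup>2 \<partial>M) \<le> C"
  shows "bounded_in_prob M U"
  unfolding bounded_in_prob_def
proof (intro allI impI)
  fix d :: real
  assume "d > 0"
  define K where "K = sqrt ((\<bar>C\<bar> + 1) / d)"
  have "K > 0" and K2: "K\<^sup>2 = (\<bar>C\<bar> + 1) / d"
    using \<open>d > 0\<close> by (simp_all add: K_def add_pos_nonneg)
  have "prob {\<omega> \<in> space M. \<bar>U n \<omega>\<bar> > K} \<le> d" for n
  proof -
    have "prob {\<omega> \<in> space M. \<bar>U n \<omega>\<bar> > K} \<le> prob {\<omega> \<in> space M. \<bar>U n \<omega>\<bar> \<ge> K}"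
      by (intro finite_measure_mono) auto
    also have "\<dots> \<le> (\<integral>\<omega>. (U n \<omega>)\<^sup>2 \<partial>M) / K\<^sup>2"
      using integrable \<open>K > 0\<close> by (intro second_moment_method) auto
    also have "\<dots> \<le> (\<bar>C\<bar> + 1) / K\<^sup>2"
      using bound[of n] by (intro divide_right_mono) auto
    also have "\<dots> = d"
      unfolding K2 using \<open>d > 0\<close> by simp
    finally show ?thesis .
  qed
  then show "\<exists>K>0. \<forall>n. prob {\<omega> \<in> space M. \<bar>U n \<omega>\<bar> > K} \<le> d"
    using \<open>K > 0\<close> by blast
qed

end

section \<open>The sample mean of a stationary sequence\<close>

lemma measurable_sample_mean [measurable]:
  assumes [measurable]: "\<And>i. Y i \<in> borel_measurable M"
  shows "sample_mean Y n \<in> borel_measurable M"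
  unfolding sample_mean_def by measurable

lemma sqrt_sample_mean_sq_eq_double_sum:
  "(sqrt (real n) * (sample_mean Y n \<omega> - m))\<^sup>2
    = (\<Sum>i=1..n. \<Sum>j=1..n. (Y i \<omega> - m) * (Y j \<omega> - m)) / real n"
proof (cases "n = 0")
  case False
  then have "sample_mean Y n \<omega> - m = (\<Sum>i=1..n. Y i \<omega> - m) / real n"
    by (simp add: sample_mean_def sum_subtractf field_simps)
  then have "(sqrt (real n) * (sample_mean Y n \<omega> - m))\<^sup>2 = real n * ((\<Sum>i=1..n. Y i \<omega> - m) / real n)\<^sup>2"
    by (simp only: power_mult_distrib) simp
  also have "\<dots> = (\<Sum>i=1..n. Y i \<omega> - m) * (\<Sum>j=1..n. Y j \<omega> - m) / real n"
    using False by (simp add: power2_eq_square)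
  finally show ?thesis
    by (simp add: sum_product)
qed simp

lemma sum_dist_le_twice_suminf:
  fixes \<gamma> :: "nat \<Rightarrow> real"
  assumes "summable \<gamma>" and "\<And>k. \<gamma> k \<ge> 0" and "finite J"
  shows "(\<Sum>j\<in>J. \<gamma> (if i \<le> j then j - i else i - j)) \<le> 2 * suminf \<gamma>"
proof -
  have reindex_le: "sum (\<gamma> \<circ> \<phi>) B \<le> suminf \<gamma>" if "inj_on \<phi> B" "finite B" for \<phi> :: "nat \<Rightarrow> nat" and B
  proof -
    have "sum (\<gamma> \<circ> \<phi>) B = sum \<gamma> (\<phi> ` B)"
      using that by (simp add: sum.reindex)
    also have "\<dots> \<le> suminf \<gamma>"
      using that assms(1,2) by (intro sum_le_suminf) auto
    finally show ?thesis .
  qed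
  have "(\<Sum>j\<in>J. \<gamma> (if i \<le> j then j - i else i - j))
      = sum (\<gamma> \<circ> (\<lambda>j. j - i)) (J \<inter> {j. i \<le> j}) + sum (\<gamma> \<circ> (\<lambda>j. i - j)) (J \<inter> - {j. i \<le> j})"
    using assms(3) by (simp add: if_distrib sum.If_cases o_def)
  also have "\<dots> \<le> suminf \<gamma> + suminf \<gamma>"
    using assms(3) by (intro add_mono reindex_le) (auto simp: inj_on_def)
  finally show ?thesis
    by simp
qed

context stationary_seq
begin

lemma integrable_centered_product:
  assumes "integrable M (\<lambda>\<omega>. (X 0 \<omega>)\<^sup>2)"
  shows "integrable M (\<lambda>\<omega>. (X i \<omega> - m) * (X j \<omega> - m))"
proof -
  have "integrable M (\<lambda>\<omega>. (X k \<omega> - m)\<^sup>2)" for k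
  proof -
    have square: "integrable M (\<lambda>\<omega>. (X k \<omega>)\<^sup>2)"
      using assms integrable_X_iff[of "\<lambda>x. x\<^sup>2" k] by simp
    then have "integrable M (X k)"
      by (rule square_integrable_imp_integrable[rotated]) simp
    with square have "integrable M (\<lambda>\<omega>. (X k \<omega>)\<^sup>2 - 2 * m * X k \<omega> + m\<^sup>2)"
      by simp
    then show ?thesis
      by (simp add: power2_diff algebra_simps)
  qed
  then have "integrable M (\<lambda>\<omega>. (X i \<omega> - m)\<^sup>2 + (X j \<omega> - m)\<^sup>2)"
    by simp
  then show ?thesis
  proof (rule Bochner_Integration.integrable_bound)
    have "\<bar>x * y\<bar> \<le> x\<^sup>2 + y\<^sup>2" for x y :: real
    proof -
      have "2 * \<bar>x\<bar> * \<bar>y\<bar> \<le> x\<^sup>2 + y\<^sup>2"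
        using sum_squares_bound[of "\<bar>x\<bar>" "\<bar>y\<bar>"] by simp
      then show ?thesis
        unfolding abs_mult using mult_nonneg_nonneg[OF abs_ge_zero abs_ge_zero, of x y] by linarith
    qed
    then show "AE \<omega> in M. norm ((X i \<omega> - m) * (X j \<omega> - m)) \<le> norm ((X i \<omega> - m)\<^sup>2 + (X j \<omega> - m)\<^sup>2)"
      by (intro AE_I2) simp
  qed measurable
qed

lemma integral_centered_product:
  assumes "i \<le> j"
  shows "(\<integral>\<omega>. (X i \<omega> - (\<integral>x. X 0 x \<partial>M)) * (X j \<omega> - (\<integral>x. X 0 x \<partial>M)) \<partial>M)
    = covariance M (X 0) (X (j - i))"
proof -
  let ?\<mu> = "\<integral>x. X 0 x \<partial>M"
  have "(\<integral>\<omega>. (X (0 + i) \<omega> - ?\<mu>) * (X (j - i + i) \<omega> - ?\<mu>) \<partial>M)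
      = (\<integral>\<omega>. (X 0 \<omega> - ?\<mu>) * (X (j - i) \<omega> - ?\<mu>) \<partial>M)"
    using integral_shifted_seq[of "\<lambda>t. (t 0 - ?\<mu>) * (t (j - i) - ?\<mu>)" i] by simp
  moreover have "(\<integral>x. X (j - i) x \<partial>M) = ?\<mu>"
    using integral_X[of "\<lambda>x. x" "j - i"] by simp
  ultimately show ?thesis
    using assms by (simp add: covariance_def)
qed

lemma sum_integral_centered_product_le:
  assumes summable: "summable (\<lambda>k. \<bar>covariance M (X 0) (X k)\<bar>)" and "finite J"
  defines "\<mu> \<equiv> \<integral>x. X 0 x \<partial>M"
  shows "(\<Sum>j\<in>J. \<integral>\<omega>. (X i \<omega> - \<mu>) * (X j \<omega> - \<mu>) \<partial>M) \<le> 2 * (\<Sum>k. \<bar>covariance M (X 0) (X k)\<bar>)"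
proof -
  have abs_eq: "\<bar>\<integral>\<omega>. (X i \<omega> - \<mu>) * (X j \<omega> - \<mu>) \<partial>M\<bar>
      = \<bar>covariance M (X 0) (X (if i \<le> j then j - i else i - j))\<bar>" for j
  proof (cases "i \<le> j")
    case True
    then show ?thesis
      using integral_centered_product[of i j] by (simp add: \<mu>_def)
  next
    case False
    have "(\<integral>\<omega>. (X i \<omega> - \<mu>) * (X j \<omega> - \<mu>) \<partial>M) = (\<integral>\<omega>. (X j \<omega> - \<mu>) * (X i \<omega> - \<mu>) \<partial>M)"
      by (simp only: mult.commute)
    with False show ?thesis
      using integral_centered_product[of j i] by (simp add: \<mu>_def)
  qed
  have "(\<integral>\<omega>. (X i \<omega> - \<mu>) * (X j \<omega> - \<mu>) \<partial>M)
      \<le> \<bar>covariance M (X 0) (X (if i \<le> j then j - i else i - j))\<bar>" for j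
    unfolding abs_eq[of j, symmetric] by (rule abs_ge_self)
  then have "(\<Sum>j\<in>J. \<integral>\<omega>. (X i \<omega> - \<mu>) * (X j \<omega> - \<mu>) \<partial>M)
      \<le> (\<Sum>j\<in>J. \<bar>covariance M (X 0) (X (if i \<le> j then j - i else i - j))\<bar>)"
    by (rule sum_mono)
  also have "\<dots> \<le> 2 * (\<Sum>k. \<bar>covariance M (X 0) (X k)\<bar>)"
    by (rule sum_dist_le_twice_suminf[OF summable _ \<open>finite J\<close>]) simp
  finally show ?thesis .
qed

theorem second_moment_sqrt_sample_mean:
  assumes square: "integrable M (\<lambda>\<omega>. (X 0 \<omega>)\<^sup>2)"
    and summable: "summable (\<lambda>k. \<bar>covariance M (X 0) (X k)\<bar>)"
  defines "\<mu> \<equiv> \<integral>x. X 0 x \<partial>M"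
  shows "integrable M (\<lambda>\<omega>. (sqrt (real n) * (sample_mean X n \<omega> - \<mu>))\<^sup>2)"
    and "(\<integral>\<omega>. (sqrt (real n) * (sample_mean X n \<omega> - \<mu>))\<^sup>2 \<partial>M)
           \<le> 2 * (\<Sum>k. \<bar>covariance M (X 0) (X k)\<bar>)"
proof -
  have expand: "(\<lambda>\<omega>. (sqrt (real n) * (sample_mean X n \<omega> - \<mu>))\<^sup>2)
      = (\<lambda>\<omega>. (\<Sum>i=1..n. \<Sum>j=1..n. (X i \<omega> - \<mu>) * (X j \<omega> - \<mu>)) / real n)"
    by (simp add: sqrt_sample_mean_sq_eq_double_sum)
  have integrable: "integrable M (\<lambda>\<omega>. (X i \<omega> - \<mu>) * (X j \<omega> - \<mu>))" for i j
    by (rule integrable_centered_product[OF square])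
  then show "integrable M (\<lambda>\<omega>. (sqrt (real n) * (sample_mean X n \<omega> - \<mu>))\<^sup>2)"
    unfolding expand by simp
  have "(\<integral>\<omega>. (\<Sum>i=1..n. \<Sum>j=1..n. (X i \<omega> - \<mu>) * (X j \<omega> - \<mu>)) / real n \<partial>M)
      = (\<Sum>i=1..n. \<Sum>j=1..n. \<integral>\<omega>. (X i \<omega> - \<mu>) * (X j \<omega> - \<mu>) \<partial>M) / real n"
    using integrable by (simp add: Bochner_Integration.integral_sum integrable_sum)
  also have "\<dots> \<le> (\<Sum>i=1..n. 2 * (\<Sum>k. \<bar>covariance M (X 0) (X k)\<bar>)) / real n"
    using sum_integral_centered_product_le[OF summable] unfolding \<mu>_def
    by (intro divide_right_mono sum_mono) auto
  also have "\<dots> \<le> 2 * (\<Sum>k. \<bar>covariance M (X 0) (X k)\<bar>)"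
  proof (cases "n = 0")
    case True
    have "0 \<le> (\<Sum>k. \<bar>covariance M (X 0) (X k)\<bar>)"
      using summable by (rule suminf_nonneg) simp
    with True show ?thesis
      by simp
  qed simp
  finally show "(\<integral>\<omega>. (sqrt (real n) * (sample_mean X n \<omega> - \<mu>))\<^sup>2 \<partial>M)
      \<le> 2 * (\<Sum>k. \<bar>covariance M (X 0) (X k)\<bar>)"
    unfolding expand .
qed

corollary bounded_in_prob_sqrt_sample_mean:
  assumes "integrable M (\<lambda>\<omega>. (X 0 \<omega>)\<^sup>2)"
    and "summable (\<lambda>i. \<bar>covariance M (X 0) (X i)\<bar>)"
  shows "bounded_in_prob M (\<lambda>n \<omega>. sqrt (real n) * (sample_mean X n \<omega> - (\<integral>x. X 0 x \<partial>M)))"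
  using second_moment_sqrt_sample_mean[OF assms]
  by (intro bounded_in_prob_if_second_moment_le) auto

end

context ergodic_seq
begin

lemma ergodic_seq_Suc: "ergodic_seq M (\<lambda>i. X (Suc i))"
proof -
  have law: "distr M seq_space (\<lambda>\<omega> i. X (Suc (i + k)) \<omega>) = distr M seq_space (\<lambda>\<omega> i. X i \<omega>)" for k
    using stationary unfolding stationary_process_def by (simp only: add_Suc_right[symmetric])
  have "stationary_process M (\<lambda>i. X (Suc i))"
    unfolding stationary_process_def using law[of 0] law by simp
  moreover have "ergodic_process M (\<lambda>i. X (Suc i))"
    using ergodic law[of 0] unfolding ergodic_process_def seq_law_def by simp
  ultimately show ?thesis
    using prob_space_axioms unfolding ergodic_seq_def ergodic_seq_axioms_def stationary_seq_def
      stationary_seq_axioms_def by simp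
qed

theorem tendsto_zero_in_prob_sample_average:
  assumes [measurable]: "g \<in> borel_measurable borel"
    and integrable: "integrable M (\<lambda>\<omega>. g (X 0 \<omega>))"
  shows "tendsto_zero_in_prob M (\<lambda>n \<omega>. (\<Sum>i=1..n. g (X i \<omega>)) / real n - (\<integral>\<omega>. g (X 0 \<omega>) \<partial>M))"
proof -
  interpret shifted: ergodic_seq M "\<lambda>i. X (Suc i)"
    by (rule ergodic_seq_Suc)
  have "integrable M (\<lambda>\<omega>. g (X 1 \<omega>))" and "(\<integral>\<omega>. g (X 1 \<omega>) \<partial>M) = (\<integral>\<omega>. g (X 0 \<omega>) \<partial>M)"
    using integrable integrable_X_iff[of g 1] integral_X[of g 1] by simp_all
  then have "AE \<omega> in M. (\<lambda>n. (\<Sum>i<n. g (X (Suc i) \<omega>)) / real n) \<longlonglongrightarrow> (\<integral>\<omega>. g (X 0 \<omega>) \<partial>M)"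
    using shifted.birkhoff_ergodic_AE[of g] by simp
  then have "AE \<omega> in M. (\<lambda>n. (\<Sum>i=1..n. g (X i \<omega>)) / real n - (\<integral>\<omega>. g (X 0 \<omega>) \<partial>M)) \<longlonglongrightarrow> 0"
    by (rule eventually_mono) (simp add: sum.atLeast1_atMost_eq LIM_zero)
  then show ?thesis
    by (rule tendsto_zero_in_prob_AE[rotated]) measurable
qed

end

section \<open>Linearization of the absolute deviations\<close>

lemma abs_power_le_one_plus_abs_power:
  assumes "p \<le> q"
  shows "\<bar>x :: real\<bar> ^ p \<le> 1 + \<bar>x\<bar> ^ q"
proof (cases "\<bar>x\<bar> \<le> 1")
  case True
  then have "\<bar>x\<bar> ^ p \<le> 1"
    by (intro power_le_one) auto
  then show ?thesis
    by (simp add: add_increasing2)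
next
  case False
  then have "\<bar>x\<bar> ^ p \<le> \<bar>x\<bar> ^ q"
    using assms by (intro power_increasing) auto
  then show ?thesis
    by simp
qed

lemma abs_diff_power_le: "\<bar>(a :: real) - b\<bar> ^ v \<le> 2 ^ v * (\<bar>a\<bar> ^ v + \<bar>b\<bar> ^ v)"
proof -
  have "\<bar>a - b\<bar> \<le> 2 * max \<bar>a\<bar> \<bar>b\<bar>"
    by linarith
  then have "\<bar>a - b\<bar> ^ v \<le> 2 ^ v * max \<bar>a\<bar> \<bar>b\<bar> ^ v"
    by (metis abs_ge_zero power_mono power_mult_distrib)
  also have "max \<bar>a\<bar> \<bar>b\<bar> ^ v \<le> \<bar>a\<bar> ^ v + \<bar>b\<bar> ^ v"
    by (simp add: max_def)
  finally show ?thesis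
    by simp
qed

context finite_measure
begin

lemma integrable_abs_power_le:
  fixes f :: "'a \<Rightarrow> real"
  assumes [measurable]: "f \<in> borel_measurable M"
    and "integrable M (\<lambda>x. \<bar>f x\<bar> ^ q)" and "p \<le> q"
  shows "integrable M (\<lambda>x. \<bar>f x\<bar> ^ p)"
proof (rule Bochner_Integration.integrable_bound)
  show "integrable M (\<lambda>x. 1 + \<bar>f x\<bar> ^ q)"
    using assms(2) by simp
  show "AE x in M. norm (\<bar>f x\<bar> ^ p) \<le> norm (1 + \<bar>f x\<bar> ^ q)"
    using abs_power_le_one_plus_abs_power[OF \<open>p \<le> q\<close>] by (intro AE_I2) simp
qed measurable

lemma integrable_centered_power_sgn:
  fixes f :: "'a \<Rightarrow> real"
  assumes [measurable]: "f \<in> borel_measurable M"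
    and "integrable M (\<lambda>x. \<bar>f x\<bar> ^ v)"
  shows "integrable M (\<lambda>x. (f x - m) ^ v * sgn (m - f x))"
proof (rule Bochner_Integration.integrable_bound)
  show "integrable M (\<lambda>x. 2 ^ v * (\<bar>f x\<bar> ^ v + \<bar>m\<bar> ^ v))"
    using assms(2) by simp
  have "\<bar>(f x - m) ^ v * sgn (m - f x)\<bar> \<le> \<bar>f x - m\<bar> ^ v" for x
    by (simp add: abs_mult power_abs abs_sgn_eq mult_le_cancel_left1)
  then show "AE x in M. norm ((f x - m) ^ v * sgn (m - f x)) \<le> norm (2 ^ v * (\<bar>f x\<bar> ^ v + \<bar>m\<bar> ^ v))"
    by (intro AE_I2) (simp add: order_trans[OF _ abs_diff_power_le])
qed measurable

end

text \<open>If \<open>\<bar>a\<bar> > \<bar>d\<bar>\<close>, then \<open>a - d\<close> has the sign of \<open>a\<close> and the error vanishes; otherwise every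
  factor is bounded by a power of \<open>\<bar>d\<bar>\<close>.\<close>
lemma abs_deviation_linearization_error:
  fixes a d :: real
  shows "\<bar>a ^ v * (\<bar>a - d\<bar> - \<bar>a\<bar>) - d * (a ^ v * sgn (- a))\<bar> \<le> 2 * \<bar>d\<bar> ^ Suc v"
proof (cases "\<bar>a\<bar> > \<bar>d\<bar>")
  case True
  then have "\<bar>a - d\<bar> - \<bar>a\<bar> = d * sgn (- a)"
    by (cases "a > 0") (auto simp: sgn_if)
  then have "a ^ v * (\<bar>a - d\<bar> - \<bar>a\<bar>) - d * (a ^ v * sgn (- a)) = 0"
    by (simp only:) (simp add: algebra_simps)
  then show ?thesis
    by simp
next
  case False
  then have "\<bar>a\<bar> ^ v \<le> \<bar>d\<bar> ^ v"
    by (intro power_mono) auto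
  have "\<bar>a ^ v * (\<bar>a - d\<bar> - \<bar>a\<bar>)\<bar> \<le> \<bar>d\<bar> ^ v * \<bar>d\<bar>"
    unfolding abs_mult power_abs by (rule mult_mono) (use \<open>\<bar>a\<bar> ^ v \<le> \<bar>d\<bar> ^ v\<close> in auto)
  moreover have "\<bar>d * (a ^ v * sgn (- a))\<bar> \<le> \<bar>d\<bar> * \<bar>d\<bar> ^ v"
    unfolding abs_mult power_abs abs_sgn_eq
    by (rule mult_left_mono) (use \<open>\<bar>a\<bar> ^ v \<le> \<bar>d\<bar> ^ v\<close> in auto)
  ultimately show ?thesis
    using abs_triangle_ineq4[of "a ^ v * (\<bar>a - d\<bar> - \<bar>a\<bar>)" "d * (a ^ v * sgn (- a))"]
    by (simp add: mult.commute)
qed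

lemma sqrt_mean_abs_deviation_linearization_le:
  fixes x :: "nat \<Rightarrow> real" and \<mu> d c :: real
  assumes "n > 0"
  shows "\<bar>sqrt (real n) * ((\<Sum>i=1..n. (x i - \<mu>) ^ v * (\<bar>x i - (\<mu> + d)\<bar> - \<bar>x i - \<mu>\<bar>)) / real n - d * c)\<bar>
    \<le> \<bar>sqrt (real n) * d\<bar> * (\<bar>(\<Sum>i=1..n. (x i - \<mu>) ^ v * sgn (\<mu> - x i)) / real n - c\<bar> + 2 * \<bar>d\<bar> ^ v)"
proof -
  define r where "r i = (x i - \<mu>) ^ v * (\<bar>x i - (\<mu> + d)\<bar> - \<bar>x i - \<mu>\<bar>) - d * ((x i - \<mu>) ^ v * sgn (\<mu> - x i))" for i
  define A where "A = (\<Sum>i=1..n. (x i - \<mu>) ^ v * sgn (\<mu> - x i)) / real n"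
  have "\<bar>r i\<bar> \<le> 2 * \<bar>d\<bar> ^ Suc v" for i
    using abs_deviation_linearization_error[of "x i - \<mu>" v d] unfolding r_def by (simp add: algebra_simps)
  then have "(\<Sum>i=1..n. \<bar>r i\<bar>) \<le> real n * (2 * \<bar>d\<bar> ^ Suc v)"
    using sum_bounded_above[of "{1..n}" "\<lambda>i. \<bar>r i\<bar>"] by simp
  then have "\<bar>\<Sum>i=1..n. r i\<bar> \<le> real n * (2 * \<bar>d\<bar> ^ Suc v)"
    by (rule order_trans[OF sum_abs])
  then have remainder: "\<bar>(\<Sum>i=1..n. r i) / real n\<bar> \<le> 2 * \<bar>d\<bar> ^ Suc v"
    using assms by (simp add: divide_le_eq mult.commute)
  have "(\<Sum>i=1..n. (x i - \<mu>) ^ v * (\<bar>x i - (\<mu> + d)\<bar> - \<bar>x i - \<mu>\<bar>)) / real n - d * c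
      = d * (A - c) + (\<Sum>i=1..n. r i) / real n"
    using assms by (simp add: r_def A_def sum.distrib sum_subtractf sum_distrib_left field_simps)
  then have "\<bar>sqrt (real n) * ((\<Sum>i=1..n. (x i - \<mu>) ^ v * (\<bar>x i - (\<mu> + d)\<bar> - \<bar>x i - \<mu>\<bar>)) / real n - d * c)\<bar>
      \<le> \<bar>sqrt (real n) * d\<bar> * \<bar>A - c\<bar> + sqrt (real n) * \<bar>(\<Sum>i=1..n. r i) / real n\<bar>"
    by (simp add: abs_mult distrib_left mult.assoc abs_triangle_ineq[THEN order_trans])
  also have "\<dots> \<le> \<bar>sqrt (real n) * d\<bar> * \<bar>A - c\<bar> + sqrt (real n) * (2 * \<bar>d\<bar> ^ Suc v)"
    using remainder by (intro add_left_mono mult_left_mono) auto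
  finally show ?thesis
    by (simp add: A_def abs_mult algebra_simps)
qed

lemma (in prob_space) small_o_P_mean_abs_deviation_linearization:
  fixes Y :: "nat \<Rightarrow> 'a \<Rightarrow> real" and \<mu> c :: real
  assumes [measurable]: "\<And>i. Y i \<in> borel_measurable M"
    and bounded: "bounded_in_prob M (\<lambda>n \<omega>. sqrt (real n) * (sample_mean Y n \<omega> - \<mu>))"
    and average: "tendsto_zero_in_prob M
      (\<lambda>n \<omega>. (\<Sum>i=1..n. (Y i \<omega> - \<mu>) ^ v * sgn (\<mu> - Y i \<omega>)) / real n - c)"
    and "v \<ge> 1"
  shows "small_o_P M
     (\<lambda>n \<omega>. (\<Sum>i=1..n. (Y i \<omega> - \<mu>) ^ v * (\<bar>Y i \<omega> - sample_mean Y n \<omega>\<bar> - \<bar>Y i \<omega> - \<mu>\<bar>)) / real n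
             - (sample_mean Y n \<omega> - \<mu>) * c)
     (\<lambda>n. 1 / sqrt (real n))" (is "small_o_P M ?R _")
proof -
  define D where "D n \<omega> = sample_mean Y n \<omega> - \<mu>" for n \<omega>
  define U where "U n \<omega> = sqrt (real n) * D n \<omega>" for n \<omega>
  define A where "A n \<omega> = (\<Sum>i=1..n. (Y i \<omega> - \<mu>) ^ v * sgn (\<mu> - Y i \<omega>)) / real n - c" for n \<omega>
  have [measurable]: "D n \<in> borel_measurable M" "U n \<in> borel_measurable M" "A n \<in> borel_measurable M" for n
    unfolding D_def U_def A_def by measurable
  have "tendsto_zero_in_prob M D"
    using bounded unfolding D_def by (rule tendsto_zero_in_prob_if_bounded_in_prob_sqrt[rotated]) measurable
  then have "tendsto_zero_in_prob M (\<lambda>n \<omega>. \<bar>A n \<omega>\<bar> + 2 * \<bar>D n \<omega>\<bar> ^ v)"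
    using average \<open>v \<ge> 1\<close> unfolding A_def
    by (intro tendsto_zero_in_prob_add tendsto_zero_in_prob_cmult tendsto_zero_in_prob_power)
      (auto simp: tendsto_zero_in_prob_def)
  then have "tendsto_zero_in_prob M (\<lambda>n \<omega>. U n \<omega> * (\<bar>A n \<omega>\<bar> + 2 * \<bar>D n \<omega>\<bar> ^ v))"
    using bounded unfolding U_def D_def by (intro tendsto_zero_in_prob_mult_bounded) auto
  then show ?thesis
    unfolding small_o_P_iff_tendsto_zero_in_prob
  proof (rule tendsto_zero_in_prob_dominated[rotated])
    have "\<bar>?R n \<omega> / (1 / sqrt (real n))\<bar> \<le> \<bar>U n \<omega> * (\<bar>A n \<omega>\<bar> + 2 * \<bar>D n \<omega>\<bar> ^ v)\<bar>"
      if "n \<ge> 1" for n \<omega>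
    proof -
      have "\<mu> + D n \<omega> = sample_mean Y n \<omega>"
        by (simp add: D_def)
      then have "\<bar>sqrt (real n) * ?R n \<omega>\<bar> \<le> \<bar>U n \<omega>\<bar> * (\<bar>A n \<omega>\<bar> + 2 * \<bar>D n \<omega>\<bar> ^ v)"
        using sqrt_mean_abs_deviation_linearization_le[of n "\<lambda>i. Y i \<omega>" \<mu> v "D n \<omega>" c] that
        unfolding U_def A_def by (simp add: D_def)
      then show ?thesis
        by (simp add: abs_mult mult.commute)
    qed
    then show "\<forall>\<^sub>F n in sequentially. \<forall>\<omega>\<in>space M.
        \<bar>?R n \<omega> / (1 / sqrt (real n))\<bar> \<le> \<bar>U n \<omega> * (\<bar>A n \<omega>\<bar> + 2 * \<bar>D n \<omega>\<bar> ^ v)\<bar>"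
      unfolding eventually_sequentially by blast
  qed measurable
qed

theorem lemma4:
  fixes M :: "'a measure" and X :: "nat \<Rightarrow> 'a \<Rightarrow> real" and v :: nat
  assumes "prob_space M"
    and "\<And>i. X i \<in> borel_measurable M"
    and "stationary_process M X"
    and "ergodic_process M X"
    and "v \<ge> 1"
    and "v \<le> 2 \<Longrightarrow> integrable M (\<lambda>\<omega>. (X 0 \<omega>)\<^sup>2)"
    and "v > 2 \<Longrightarrow> integrable M (\<lambda>\<omega>. \<bar>X 0 \<omega>\<bar> ^ v)"
    and "summable (\<lambda>i. \<bar>covariance M (X 0) (X i)\<bar>)"
  shows "small_o_P M
     (\<lambda>n \<omega>. (\<Sum>i=1..n. (X i \<omega> - (\<integral>x. X 0 x \<partial>M)) ^ v *
                 (\<bar>X i \<omega> - sample_mean X n \<omega>\<bar> - \<bar>X i \<omega> - (\<integral>x. X 0 x \<partial>M)\<bar>)) / real n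
             - (sample_mean X n \<omega> - (\<integral>x. X 0 x \<partial>M)) *
                 (\<integral>x. (X 0 x - (\<integral>y. X 0 y \<partial>M)) ^ v * sgn ((\<integral>y. X 0 y \<partial>M) - X 0 x) \<partial>M))
     (\<lambda>n. 1 / sqrt (real n))"
proof -
  interpret ergodic_seq M X
    using assms(1-4) by (simp add: ergodic_seq_def ergodic_seq_axioms_def stationary_seq_def
      stationary_seq_axioms_def)
  define \<mu> where "\<mu> = (\<integral>x. X 0 x \<partial>M)"
  have square: "integrable M (\<lambda>\<omega>. (X 0 \<omega>)\<^sup>2)"
    using assms(6,7) integrable_abs_power_le[of "X 0" v 2] by (cases "v \<le> 2") auto
  have power: "integrable M (\<lambda>\<omega>. \<bar>X 0 \<omega>\<bar> ^ v)"
    using assms(7) square integrable_abs_power_le[of "X 0" 2 v] by (cases "v \<le> 2") auto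
  have "tendsto_zero_in_prob M (\<lambda>n \<omega>. (\<Sum>i=1..n. (X i \<omega> - \<mu>) ^ v * sgn (\<mu> - X i \<omega>)) / real n
      - (\<integral>x. (X 0 x - \<mu>) ^ v * sgn (\<mu> - X 0 x) \<partial>M))"
    using integrable_centered_power_sgn[OF _ power, of \<mu>]
    by (intro tendsto_zero_in_prob_sample_average[of "\<lambda>x. (x - \<mu>) ^ v * sgn (\<mu> - x)"]) auto
  with bounded_in_prob_sqrt_sample_mean[OF square assms(8)] show ?thesis
    unfolding \<mu>_def by (rule small_o_P_mean_abs_deviation_linearization[OF assms(2) _ _ assms(5)])
qed

end
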